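(* Let $n\ge 0$, let $A\in\mathcal{PM}(n)$ and let $v\in\{0,1\}^n$ be a row vector. Then $v$ is a poset vector of $A$ if and only if $\mathrm{supp}(v)$ is an order ideal of $P_A$. Moreover, the map $v\mapsto \mathrm{supp}(v)$ is a bijection between the set of poset vectors of $A$ (equivalently, the set of $v$-extensions $A^v$ of $A$) and the set of order ideals of $P_A$.
   Context: Let $X_n=\{0,1,\ldots,n-1\}$. A naturally labeled (NL) poset on $X_n$ is a partial order $\preceq$ on $X_n$ such that $x\preceq y$ implies $x\le y$ in the usual integer order. Its poset matrix is the $n\times n$ $(0,1)$-matrix $A=(a_{i,j})_{i,j\in X_n}$ (indices starting from $0$) with $a_{i,j}=1$ if $j\preceq i$ and $a_{i,j}=0$ otherwise. $\mathcal{PM}(n)$ denotes the set of poset matrices of NL posets on $X_n$, and for $A\in\mathcal{PM}(n)$, $P_A$ is the unique NL poset on $X_n$ whose poset matrix is $A$. For a row vector $v\in\{0,1\}^n$, the $v$-extension of $A$ is the $(n+1)\times(n+1)$ matrix $A^v=\begin{bmatrix}A&\mathbf{0}\\ v&1\end{bmatrix}$, and $v$ is called a poset vector of $A$ if $A^v\in\mathcal{PM}(n+1)$. $\mathrm{supp}(v)=\{j\in X_n: v_j=1\}$. An order ideal of a poset is a downward closed subset (the empty set included). *)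

theory Defs
  imports Main
begin

text \<open>Elements of X_n are the naturals i < n. A binary relation R on X_n is given as
  R x y meaning x \<preceq> y. Matrices are functions nat \<Rightarrow> nat \<Rightarrow> nat
  (row index, column index), with all entries outside X_n \<times> X_n equal to 0;
  row vectors are functions nat \<Rightarrow> nat, zero outside X_n.\<close>

definition NL_poset :: "nat \<Rightarrow> (nat \<Rightarrow> nat \<Rightarrow> bool) \<Rightarrow> bool" where
  "NL_poset n R \<longleftrightarrow>
     (\<forall>x y. R x y \<longrightarrow> x < n \<and> y < n) \<and>
     (\<forall>x<n. R x x) \<and>
     (\<forall>x y. R x y \<and> R y x \<longrightarrow> x = y) \<and>
     (\<forall>x y z. R x y \<and> R y z \<longrightarrow> R x z) \<and>
     (\<forall>x y. R x y \<longrightarrow> x \<le> y)"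

definition poset_matrix :: "nat \<Rightarrow> (nat \<Rightarrow> nat \<Rightarrow> bool) \<Rightarrow> nat \<Rightarrow> nat \<Rightarrow> nat" where
  "poset_matrix n R = (\<lambda>i j. if i < n \<and> j < n \<and> R j i then 1 else 0)"

definition PM :: "nat \<Rightarrow> (nat \<Rightarrow> nat \<Rightarrow> nat) set" where
  "PM n = {poset_matrix n R | R. NL_poset n R}"

definition P_of :: "nat \<Rightarrow> (nat \<Rightarrow> nat \<Rightarrow> nat) \<Rightarrow> (nat \<Rightarrow> nat \<Rightarrow> bool)" where
  "P_of n A = (THE R. NL_poset n R \<and> poset_matrix n R = A)"

definition zero_one_vectors :: "nat \<Rightarrow> (nat \<Rightarrow> nat) set" where
  "zero_one_vectors n = {v. (\<forall>j<n. v j \<in> {0, 1}) \<and> (\<forall>j\<ge>n. v j = 0)}"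

definition v_extension :: "nat \<Rightarrow> (nat \<Rightarrow> nat \<Rightarrow> nat) \<Rightarrow> (nat \<Rightarrow> nat) \<Rightarrow> nat \<Rightarrow> nat \<Rightarrow> nat" where
  "v_extension n A v = (\<lambda>i j.
     if i < n \<and> j < n then A i j
     else if i = n \<and> j < n then v j
     else if i = n \<and> j = n then 1
     else 0)"

definition poset_vector :: "nat \<Rightarrow> (nat \<Rightarrow> nat \<Rightarrow> nat) \<Rightarrow> (nat \<Rightarrow> nat) \<Rightarrow> bool" where
  "poset_vector n A v \<longleftrightarrow> v_extension n A v \<in> PM (Suc n)"

definition supp :: "nat \<Rightarrow> (nat \<Rightarrow> nat) \<Rightarrow> nat set" where
  "supp n v = {j. j < n \<and> v j = 1}"

definition order_ideal :: "nat \<Rightarrow> (nat \<Rightarrow> nat \<Rightarrow> bool) \<Rightarrow> nat set \<Rightarrow> bool" where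
  "order_ideal n R I \<longleftrightarrow> I \<subseteq> {..<n} \<and> (\<forall>x\<in>I. \<forall>y. R y x \<longrightarrow> y \<in> I)"

end

theory Submission
  imports Defs
begin

text \<open>Adjoin a new element n to P_A and put below it exactly the elements of a set I.
  The result is a naturally labeled poset iff I is downward closed (transitivity through n is
  precisely the ideal property), and its poset matrix is the v-extension of A for the indicator
  vector v of I. Conversely, the entries of a v-extension in PM(n+1) show that the order it
  encodes restricts to P_A and has supp v below n, so supp v is an ideal. Both maps are
  injective because a 0-1 vector is determined by its support, and by the last row of its
  v-extension.\<close>

lemma NL_posetI:
  assumes "\<And>x y. R x y \<Longrightarrow> x < n \<and> y < n" and "\<And>x. x < n \<Longrightarrow> R x x"
    and "\<And>x y. R x y \<Longrightarrow> R y x \<Longrightarrow> x = y" and "\<And>x y z. R x y \<Longrightarrow> R y z \<Longrightarrow> R x z"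
    and "\<And>x y. R x y \<Longrightarrow> x \<le> y"
  shows "NL_poset n R"
  using assms unfolding NL_poset_def by blast

context
  fixes n R
  assumes R: "NL_poset n R"
begin

lemma NL_poset_in_range: "R x y \<Longrightarrow> x < n \<and> y < n"
  using R unfolding NL_poset_def by blast

lemma NL_poset_refl: "x < n \<Longrightarrow> R x x"
  using R unfolding NL_poset_def by blast

lemma NL_poset_antisym: "R x y \<Longrightarrow> R y x \<Longrightarrow> x = y"
  using R unfolding NL_poset_def by blast

lemma NL_poset_trans: "R x y \<Longrightarrow> R y z \<Longrightarrow> R x z"
  using R unfolding NL_poset_def by blast

lemma NL_poset_le: "R x y \<Longrightarrow> x \<le> y"
  using R unfolding NL_poset_def by blast

end

lemma poset_matrix_inj:
  assumes "NL_poset n R" "NL_poset n R'" "poset_matrix n R = poset_matrix n R'"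
  shows "R = R'"
proof (intro ext)
  fix x y
  have "poset_matrix n R y x = poset_matrix n R' y x"
    using assms(3) by simp
  then show "R x y = R' x y"
    using NL_poset_in_range[OF assms(1)] NL_poset_in_range[OF assms(2)]
    unfolding poset_matrix_def by (metis one_neq_zero)
qed

lemma P_of_poset_matrix:
  "NL_poset n R \<Longrightarrow> P_of n (poset_matrix n R) = R"
  unfolding P_of_def by (rule the_equality) (auto dest: poset_matrix_inj)

definition ideal_extension :: "nat \<Rightarrow> (nat \<Rightarrow> nat \<Rightarrow> bool) \<Rightarrow> nat set \<Rightarrow> nat \<Rightarrow> nat \<Rightarrow> bool" where
  "ideal_extension n R I x y \<longleftrightarrow> R x y \<or> (y = n \<and> (x = n \<or> x \<in> I))"

lemma NL_poset_ideal_extension: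
  assumes R: "NL_poset n R" and I: "order_ideal n R I"
  shows "NL_poset (Suc n) (ideal_extension n R I)"
proof (rule NL_posetI)
  have I_range: "x \<in> I \<Longrightarrow> x < n" and down: "x \<in> I \<Longrightarrow> R y x \<Longrightarrow> y \<in> I" for x y
    using I unfolding order_ideal_def by blast+
  note range = NL_poset_in_range[OF R]
  show "x < Suc n \<and> y < Suc n" if "ideal_extension n R I x y" for x y
    using that range I_range unfolding ideal_extension_def by (metis less_SucI lessI)
  show "ideal_extension n R I x x" if "x < Suc n" for x
    using that NL_poset_refl[OF R] unfolding ideal_extension_def by (auto simp: less_Suc_eq)
  show "x = y" if "ideal_extension n R I x y" "ideal_extension n R I y x" for x y
    using that range NL_poset_antisym[OF R] unfolding ideal_extension_def by blast
  show "ideal_extension n R I x z"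
    if "ideal_extension n R I x y" "ideal_extension n R I y z" for x y z
    using that range down NL_poset_trans[OF R] unfolding ideal_extension_def by blast
  show "x \<le> y" if "ideal_extension n R I x y" for x y
    using that NL_poset_le[OF R] I_range unfolding ideal_extension_def by fastforce
qed

lemma poset_matrix_ideal_extension:
  assumes R: "NL_poset n R" and v: "v \<in> zero_one_vectors n"
  shows "poset_matrix (Suc n) (ideal_extension n R (supp n v)) = v_extension n (poset_matrix n R) v"
proof (intro ext)
  fix i j
  have "j < n \<Longrightarrow> v j = 0 \<or> v j = 1"
    using v unfolding zero_one_vectors_def by auto
  then show "poset_matrix (Suc n) (ideal_extension n R (supp n v)) i j
      = v_extension n (poset_matrix n R) v i j"
    using NL_poset_in_range[OF R]
    unfolding poset_matrix_def v_extension_def ideal_extension_def supp_def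
    by (auto simp: less_Suc_eq)
qed

lemma order_ideal_supp_if_v_extension:
  assumes R: "NL_poset n R" and R': "NL_poset (Suc n) R'"
    and eq: "poset_matrix (Suc n) R' = v_extension n (poset_matrix n R) v"
  shows "order_ideal n R (supp n v)"
proof -
  have restrict: "R' x y" if "R x y" for x y
  proof -
    have "poset_matrix (Suc n) R' y x = v_extension n (poset_matrix n R) v y x"
      using eq by simp
    then show ?thesis
      using that NL_poset_in_range[OF R that]
      unfolding poset_matrix_def v_extension_def by (simp split: if_splits)
  qed
  have last_row: "R' j n \<longleftrightarrow> j \<in> supp n v" if "j < n" for j
  proof -
    have "poset_matrix (Suc n) R' n j = v_extension n (poset_matrix n R) v n j"
      using eq by simp
    then show ?thesis
      using that unfolding poset_matrix_def v_extension_def supp_def by (auto split: if_splits)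
  qed
  show ?thesis
    unfolding order_ideal_def
  proof (intro conjI ballI allI impI)
    show "supp n v \<subseteq> {..<n}"
      by (auto simp: supp_def)
  next
    fix x y assume x: "x \<in> supp n v" and yx: "R y x"
    have "R' y n"
      using NL_poset_trans[OF R' restrict[OF yx]] last_row x by (simp add: supp_def)
    then show "y \<in> supp n v"
      using last_row NL_poset_in_range[OF R yx] by blast
  qed
qed

lemma poset_vector_iff_order_ideal:
  assumes R: "NL_poset n R" and v: "v \<in> zero_one_vectors n"
  shows "poset_vector n (poset_matrix n R) v \<longleftrightarrow> order_ideal n R (supp n v)"
proof
  assume "poset_vector n (poset_matrix n R) v"
  then obtain R' where "NL_poset (Suc n) R'"
    and "poset_matrix (Suc n) R' = v_extension n (poset_matrix n R) v"
    unfolding poset_vector_def PM_def by auto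
  then show "order_ideal n R (supp n v)"
    using R by (intro order_ideal_supp_if_v_extension)
next
  assume "order_ideal n R (supp n v)"
  then have "NL_poset (Suc n) (ideal_extension n R (supp n v))"
    using R by (intro NL_poset_ideal_extension)
  then show "poset_vector n (poset_matrix n R) v"
    unfolding poset_vector_def PM_def
    using poset_matrix_ideal_extension[OF R v, symmetric] by blast
qed

lemma zero_one_vector_eqI:
  assumes "v \<in> zero_one_vectors n" "w \<in> zero_one_vectors n" "\<And>j. j < n \<Longrightarrow> v j = w j"
  shows "v = w"
proof
  fix j
  show "v j = w j"
    using assms unfolding zero_one_vectors_def by (cases "j < n") auto
qed

lemma inj_on_supp: "inj_on (supp n) (zero_one_vectors n)"
proof (rule inj_onI)
  fix v w assume v: "v \<in> zero_one_vectors n" and w: "w \<in> zero_one_vectors n"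
    and supp_eq: "supp n v = supp n w"
  show "v = w"
  proof (rule zero_one_vector_eqI[OF v w])
    fix j assume "j < n"
    then have "v j \<in> {0, 1}" "w j \<in> {0, 1}" "v j = 1 \<longleftrightarrow> w j = 1"
      using v w supp_eq unfolding zero_one_vectors_def supp_def by blast+
    then show "v j = w j"
      by auto
  qed
qed

lemma inj_on_v_extension: "inj_on (v_extension n A) (zero_one_vectors n)"
proof (rule inj_onI)
  fix v w assume v: "v \<in> zero_one_vectors n" and w: "w \<in> zero_one_vectors n"
    and ext_eq: "v_extension n A v = v_extension n A w"
  show "v = w"
  proof (rule zero_one_vector_eqI[OF v w])
    fix j assume "j < n"
    then show "v j = w j"
      using fun_cong[OF fun_cong[OF ext_eq, of n], of j] by (simp add: v_extension_def)
  qed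
qed

lemma supp_image_zero_one_vectors: "supp n ` zero_one_vectors n = Pow {..<n}"
proof (intro equalityI subsetI)
  fix I assume "I \<in> Pow {..<n}"
  then have "supp n (\<lambda>j. if j \<in> I then 1 else 0) = I"
    and "(\<lambda>j. if j \<in> I then 1 else 0) \<in> zero_one_vectors n"
    unfolding supp_def zero_one_vectors_def by auto
  then show "I \<in> supp n ` zero_one_vectors n"
    by (metis image_eqI)
qed (auto simp: supp_def)

lemma bij_betw_supp_Collect:
  "bij_betw (supp n) {v \<in> zero_one_vectors n. P (supp n v)} {I \<in> Pow {..<n}. P I}"
proof (rule bij_betw_imageI)
  show "inj_on (supp n) {v \<in> zero_one_vectors n. P (supp n v)}"
    using inj_on_supp by (rule inj_on_subset) simp
  show "supp n ` {v \<in> zero_one_vectors n. P (supp n v)} = {I \<in> Pow {..<n}. P I}"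
    unfolding supp_image_zero_one_vectors[symmetric] by blast
qed

theorem theorem2p1:
  fixes n :: nat and A :: "nat \<Rightarrow> nat \<Rightarrow> nat"
  assumes "A \<in> PM n"
  shows "(\<forall>v\<in>zero_one_vectors n.
            poset_vector n A v \<longleftrightarrow> order_ideal n (P_of n A) (supp n v))
       \<and> bij_betw (supp n) {v \<in> zero_one_vectors n. poset_vector n A v}
                           {I. order_ideal n (P_of n A) I}
       \<and> bij_betw (v_extension n A) {v \<in> zero_one_vectors n. poset_vector n A v}
                           {v_extension n A v | v. v \<in> zero_one_vectors n \<and> poset_vector n A v}"
proof -
  obtain R where R: "NL_poset n R" and A: "A = poset_matrix n R"
    using assms unfolding PM_def by blast
  have P: "P_of n A = R"
    unfolding A using R by (rule P_of_poset_matrix)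
  have iff: "\<forall>v\<in>zero_one_vectors n. poset_vector n A v \<longleftrightarrow> order_ideal n R (supp n v)"
    using poset_vector_iff_order_ideal[OF R] by (simp add: A)
  then have vectors: "{v \<in> zero_one_vectors n. poset_vector n A v}
      = {v \<in> zero_one_vectors n. order_ideal n R (supp n v)}"
    by auto
  have ideals: "{I. order_ideal n R I} = {I \<in> Pow {..<n}. order_ideal n R I}"
    by (auto simp: order_ideal_def)
  have "bij_betw (v_extension n A) {v \<in> zero_one_vectors n. poset_vector n A v}
      {v_extension n A v | v. v \<in> zero_one_vectors n \<and> poset_vector n A v}"
  proof (rule bij_betw_imageI)
    show "inj_on (v_extension n A) {v \<in> zero_one_vectors n. poset_vector n A v}"
      using inj_on_v_extension by (rule inj_on_subset) simp
  qed auto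
  then show ?thesis
    using iff bij_betw_supp_Collect[of n "order_ideal n R"] unfolding P vectors ideals by blast
qed

end
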